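(* (1) Let $(X,* )$ be a semi-group satisfying $a*b*b*c=a*b*c$ for all $a,b,c\in X$. Then the zeroth lbo homology group is $H_0(X)=\mathbb{Z}X/\!\sim$, the free abelian group on the equivalence classes of the equivalence relation $\sim$ on $X$ generated by $a\sim b$ whenever there exist $x,y\in X$ with $a=x*y*x$ and $b=y*x*y$. (2) Let $(X,* )$ be a proto unital shelf or an idempotent semi-group. Then $H_0(X)=\mathbb{Z}X/\!\approx$, where $\approx$ is the equivalence relation on $X$ generated by $a\approx b$ whenever there exist $x,y\in X$ with $a=x*y$ and $b=y*x$. In particular, if $(X,* )$ is commutative, $H_0(X)=\mathbb{Z}X$.
   Context: For a semi-group $(X,* )$ satisfying $a*b*b*c=a*b*c$ (this includes associative shelves, proto unital shelves and idempotent semi-groups), the lbo chain complex has $C_n=\mathbb{Z}X^{n+1}$ ($n\ge0$) and $\partial_n=\sum_{i=0}^n(-1)^id_i$, where $d_0(x_0,\dots,x_n)=(x_0*x_1,x_2,\dots,x_{n-1},x_n*x_0)$, $d_n(x_0,\dots,x_n)=(x_n*x_0,x_1,\dots,x_{n-2},x_{n-1}*x_n)$, and for $0<i<n$, $d_i(x_0,\dots,x_n)=(x_0,\dots,x_{i-1}*x_i,x_i*x_{i+1},\dots,x_n)$; in particular $\partial_1(x_0,x_1)=x_0*x_1*x_0-x_1*x_0*x_1\in\mathbb{Z}X$. The lbo homology $H_n(X)$ is the homology of this complex, so $H_0(X)=\mathbb{Z}X/\operatorname{im}\partial_1$. A shelf is a set with operation satisfying $(a*b)*c=(a*c)*(b*c)$;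 a proto unital shelf is a shelf with $a*b=b*(a*b)$ and $a*b=(a*b)*b$ for all $a,b$ (these are associative). An idempotent semi-group is an associative magma with $a*a=a$ for all $a$. *)

theory Defs
  imports "HOL-Algebra.Free_Abelian_Groups"
begin

text \<open>The free abelian group ZX is modelled by the type 'a =>0 int,
  i.e. the group free_Abelian_group UNIV. C_0 = Z X and C_1 = Z (X x X).\<close>

definition lbo_boundary1 :: "('a \<Rightarrow> 'a \<Rightarrow> 'a) \<Rightarrow> (('a \<times> 'a) \<Rightarrow>\<^sub>0 int) \<Rightarrow> ('a \<Rightarrow>\<^sub>0 int)" where
  "lbo_boundary1 f =
     frag_extend (\<lambda>(x0, x1). frag_of (f (f x0 x1) x0) - frag_of (f (f x1 x0) x1))"

definition lbo_B0 :: "('a \<Rightarrow> 'a \<Rightarrow> 'a) \<Rightarrow> ('a \<Rightarrow>\<^sub>0 int) set" where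
  "lbo_B0 f = range (lbo_boundary1 f)"

text \<open>Zeroth lbo homology H_0(X) = C_0 / im d_1 (C_0 = ZX, since d_0 = 0).\<close>
definition lbo_H0 :: "('a \<Rightarrow> 'a \<Rightarrow> 'a) \<Rightarrow> (('a \<Rightarrow>\<^sub>0 int) set) monoid" where
  "lbo_H0 f = free_Abelian_group UNIV Mod lbo_B0 f"

definition class_map :: "('a \<Rightarrow> 'a \<Rightarrow> bool) \<Rightarrow> ('a \<Rightarrow>\<^sub>0 int) \<Rightarrow> ('a set \<Rightarrow>\<^sub>0 int)" where
  "class_map R = frag_extend (\<lambda>a. frag_of ({(u, v). equivclp R u v} `` {a}))"

definition H0_is_free_on_classes :: "('a \<Rightarrow> 'a \<Rightarrow> 'a) \<Rightarrow> ('a \<Rightarrow> 'a \<Rightarrow> bool) \<Rightarrow> bool" where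
  "H0_is_free_on_classes f R \<longleftrightarrow>
     lbo_B0 f = kernel (free_Abelian_group UNIV)
                       (free_Abelian_group (UNIV // {(u, v). equivclp R u v})) (class_map R)
     \<and> lbo_H0 f \<cong> free_Abelian_group (UNIV // {(u, v). equivclp R u v})"

definition is_semigroup :: "('a \<Rightarrow> 'a \<Rightarrow> 'a) \<Rightarrow> bool" where
  "is_semigroup f \<longleftrightarrow> (\<forall>a b c. f (f a b) c = f a (f b c))"

definition is_shelf :: "('a \<Rightarrow> 'a \<Rightarrow> 'a) \<Rightarrow> bool" where
  "is_shelf f \<longleftrightarrow> (\<forall>a b c. f (f a b) c = f (f a c) (f b c))"

definition is_proto_unital_shelf :: "('a \<Rightarrow> 'a \<Rightarrow> 'a) \<Rightarrow> bool" where
  "is_proto_unital_shelf f \<longleftrightarrow> is_shelf f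
     \<and> (\<forall>a b. f a b = f b (f a b)) \<and> (\<forall>a b. f a b = f (f a b) b)"

definition is_idempotent_semigroup :: "('a \<Rightarrow> 'a \<Rightarrow> 'a) \<Rightarrow> bool" where
  "is_idempotent_semigroup f \<longleftrightarrow> is_semigroup f \<and> (\<forall>a. f a a = a)"

end

theory Submission
  imports Defs
begin

text \<open>The boundaries \<open>\<partial>\<^sub>1(x, y) = xyx - yxy\<close> are exactly the differences \<open>a - b\<close> of the
  generating pairs of \<open>\<sim>\<close>, so they lie in the kernel of the class map \<open>\<int>X \<rightarrow> \<int>(X/\<sim>)\<close>. Conversely,
  choosing a representative in each class gives a section \<open>s\<close> of the class map, and \<open>c - s[c]\<close>
  is a combination of differences of \<open>\<sim>\<close>-related elements, each a sum of boundaries along a chain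
  of generating pairs; hence the kernel is the image of \<open>\<partial>\<^sub>1\<close>, and the first isomorphism theorem
  gives \<open>H\<^sub>0(X) \<cong> \<int>(X/\<sim>)\<close>. For (2) it remains to see that \<open>\<sim>\<close> and \<open>\<approx>\<close> coincide: in a proto unital
  shelf \<open>xyx = yx\<close>, and in an idempotent semigroup \<open>xy = (xy)(yx)(xy)\<close> and
  \<open>xyx \<approx> x(xy) = xy \<approx> yx = y(yx) \<approx> yxy\<close>. If moreover \<open>X\<close> is commutative then \<open>xyx = xy = yxy\<close>,
  so \<open>\<partial>\<^sub>1 = 0\<close>.\<close>

lemma frag_extend_frag_extend:
  "frag_extend f (frag_extend g c) = frag_extend (frag_extend f \<circ> g) c"
  using subset_UNIV by (induction c rule: frag_induction) (auto simp: frag_extend_diff)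

lemma frag_extend_diff_fun:
  "frag_extend (\<lambda>x. f x - g x) c = frag_extend f c - frag_extend g c"
  using subset_UNIV by (induction c rule: frag_induction) (auto simp: frag_extend_diff)

lemma frag_extend_in_range_frag_extend:
  assumes "\<And>x. g x \<in> range (frag_extend h)"
  shows "frag_extend g c \<in> range (frag_extend h)"
proof -
  have "\<forall>x. \<exists>y. g x = frag_extend h y"
    using assms by blast
  then obtain w where "g = frag_extend h \<circ> w"
    by (metis comp_apply ext)
  then have "frag_extend g c = frag_extend h (frag_extend w c)"
    by (simp add: frag_extend_frag_extend o_def)
  then show ?thesis by blast
qed

lemma equiv_equivclp: "equiv UNIV {(u, v). equivclp R u v}"
  using equivp_evquivclp[of R]
  by (simp add: equivp_def equiv_def refl_on_def sym_def trans_def)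

lemma equivclp_Image_eq:
  assumes "equivclp R a b"
  shows "{(u, v). equivclp R u v} `` {a} = {(u, v). equivclp R u v} `` {b}"
  using equiv_class_eq[OF equiv_equivclp] assms by simp

lemma Image_equivclp_of_mem_quotient:
  assumes "C \<in> UNIV // {(u, v). equivclp R u v}" and "a \<in> C"
  shows "{(u, v). equivclp R u v} `` {a} = C"
proof -
  obtain b where C: "C = {(u, v). equivclp R u v} `` {b}"
    using assms(1) by (rule quotientE)
  then have "equivclp R b a" using assms(2) by simp
  then show ?thesis unfolding C by (rule equivclp_Image_eq[symmetric])
qed

lemma equivclp_le_equivclp:
  assumes "\<And>a b. R a b \<Longrightarrow> equivclp S a b" and "equivclp R a b"
  shows "equivclp S a b"
  using assms(2)
proof (induction rule: equivclp_induct)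
  case (step y z)
  from step.hyps(2) have "equivclp S y z"
  proof
    assume "R y z"
    then show ?thesis by (rule assms(1))
  next
    assume "R z y"
    then show ?thesis by (rule equivclp_sym[OF assms(1)])
  qed
  with step.IH show ?case by (rule equivclp_trans)
qed simp

lemma equivclp_eqI:
  assumes "\<And>a b. R a b \<Longrightarrow> equivclp S a b" and "\<And>a b. S a b \<Longrightarrow> equivclp R a b"
  shows "equivclp R = equivclp S"
proof (intro ext iffI)
  fix a b
  show "equivclp S a b" if "equivclp R a b"
    using assms(1) that by (rule equivclp_le_equivclp)
  show "equivclp R a b" if "equivclp S a b"
    using assms(2) that by (rule equivclp_le_equivclp)
qed

lemma class_map_hom:
  "class_map R \<in> hom (free_Abelian_group UNIV) (free_Abelian_group (UNIV // {(u, v). equivclp R u v}))"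
proof (rule homI)
  fix c :: "'a \<Rightarrow>\<^sub>0 int"
  have "{(u, v). equivclp R u v} `` {a} \<in> UNIV // {(u, v). equivclp R u v}" for a
    by (rule quotientI) simp
  then have "Poly_Mapping.keys (class_map R c) \<subseteq> UNIV // {(u, v). equivclp R u v}"
    unfolding class_map_def by (intro order_trans[OF keys_frag_extend]) auto
  then show "class_map R c \<in> carrier (free_Abelian_group (UNIV // {(u, v). equivclp R u v}))"
    by simp
qed (simp add: class_map_def frag_extend_add)

definition class_section :: "('a set \<Rightarrow>\<^sub>0 int) \<Rightarrow> ('a \<Rightarrow>\<^sub>0 int)" where
  "class_section = frag_extend (\<lambda>C. frag_of (SOME a. a \<in> C))"

lemma class_map_class_section:
  assumes "Poly_Mapping.keys d \<subseteq> UNIV // {(u, v). equivclp R u v}"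
  shows "class_map R (class_section d) = d"
proof -
  have "class_map R (class_section d) = frag_extend (\<lambda>C. frag_of ({(u, v). equivclp R u v} `` {SOME a. a \<in> C})) d"
    by (simp add: class_map_def class_section_def frag_extend_frag_extend o_def)
  also have "\<dots> = frag_extend frag_of d"
  proof (rule frag_extend_eq)
    fix C assume "C \<in> Poly_Mapping.keys d"
    then have C: "C \<in> UNIV // {(u, v). equivclp R u v}" using assms by blast
    moreover have "(SOME a. a \<in> C) \<in> C"
      using in_quotient_imp_non_empty[OF equiv_equivclp C] by (simp add: some_in_eq)
    ultimately have "{(u, v). equivclp R u v} `` {SOME a. a \<in> C} = C"
      by (rule Image_equivclp_of_mem_quotient)
    then show "frag_of ({(u, v). equivclp R u v} `` {SOME a. a \<in> C}) = frag_of C"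
      by (rule arg_cong)
  qed
  also have "\<dots> = d" by (metis frag_expansion)
  finally show ?thesis .
qed

lemma frag_of_diff_in_range_if_equivclp:
  assumes "equivclp (\<lambda>a b. \<exists>p. a = l p \<and> b = r p) a b"
  shows "frag_of a - frag_of b \<in> range (frag_extend (\<lambda>p. frag_of (l p) - frag_of (r p)))"
  using assms
proof (induction rule: equivclp_induct)
  case base
  have "frag_of a - frag_of a = frag_extend (\<lambda>p. frag_of (l p) - frag_of (r p)) 0" by simp
  then show ?case by blast
next
  case (step y z)
  let ?D = "frag_extend (\<lambda>p. frag_of (l p) - frag_of (r p))"
  from step.IH obtain w where w: "frag_of a - frag_of y = ?D w" by blast
  from step.hyps(2) obtain p where "y = l p \<and> z = r p \<or> z = l p \<and> y = r p" by blast
  then show ?case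
  proof
    assume "y = l p \<and> z = r p"
    then have "frag_of a - frag_of z = ?D (w + frag_of p)"
      by (simp add: frag_extend_add flip: w)
    then show ?case by blast
  next
    assume "z = l p \<and> y = r p"
    then have "frag_of a - frag_of z = ?D (w - frag_of p)"
      by (simp add: frag_extend_diff flip: w)
    then show ?case by blast
  qed
qed

lemma class_map_frag_extend_diff:
  "class_map (\<lambda>a b. \<exists>p. a = l p \<and> b = r p) (frag_extend (\<lambda>p. frag_of (l p) - frag_of (r p)) c) = 0"
proof -
  have "class_map (\<lambda>a b. \<exists>p. a = l p \<and> b = r p) (frag_of (l p) - frag_of (r p)) = 0" for p
  proof -
    have "equivclp (\<lambda>a b. \<exists>p. a = l p \<and> b = r p) (l p) (r p)"
      by (rule r_into_equivclp) blast
    then have "{(u, v). equivclp (\<lambda>a b. \<exists>p. a = l p \<and> b = r p) u v} `` {l p}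
             = {(u, v). equivclp (\<lambda>a b. \<exists>p. a = l p \<and> b = r p) u v} `` {r p}"
      by (rule equivclp_Image_eq)
    then show ?thesis
      by (simp add: class_map_def frag_extend_diff)
  qed
  then show ?thesis
    unfolding class_map_def[of "\<lambda>a b. \<exists>p. a = l p \<and> b = r p"] frag_extend_frag_extend
    by (simp add: o_def frag_extend_eq_0 flip: class_map_def)
qed

lemma diff_class_section_class_map_in_range:
  "c - class_section (class_map (\<lambda>a b. \<exists>p. a = l p \<and> b = r p) c)
     \<in> range (frag_extend (\<lambda>p. frag_of (l p) - frag_of (r p)))"
proof -
  let ?S = "\<lambda>a b. \<exists>p. a = l p \<and> b = r p"
  let ?rep = "\<lambda>a. SOME b. b \<in> {(u, v). equivclp ?S u v} `` {a}"
  have "c - class_section (class_map ?S c) = frag_extend (\<lambda>a. frag_of a - frag_of (?rep a)) c"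
    by (subst (1) frag_expansion)
      (simp add: class_section_def class_map_def frag_extend_frag_extend frag_extend_diff_fun o_def)
  moreover have "equivclp ?S a (?rep a)" for a
    using someI[of "\<lambda>b. b \<in> {(u, v). equivclp ?S u v} `` {a}" a] by simp
  ultimately show ?thesis
    by (simp only:) (intro frag_extend_in_range_frag_extend frag_of_diff_in_range_if_equivclp)
qed

lemma range_frag_extend_diff_eq_kernel_class_map:
  "range (frag_extend (\<lambda>p. frag_of (l p) - frag_of (r p)))
     = kernel (free_Abelian_group UNIV)
         (free_Abelian_group (UNIV // {(u, v). equivclp (\<lambda>a b. \<exists>p. a = l p \<and> b = r p) u v}))
         (class_map (\<lambda>a b. \<exists>p. a = l p \<and> b = r p))"
proof -
  have "c \<in> range (frag_extend (\<lambda>p. frag_of (l p) - frag_of (r p)))"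
    if "class_map (\<lambda>a b. \<exists>p. a = l p \<and> b = r p) c = 0" for c
    using diff_class_section_class_map_in_range[of c l r] that by (simp add: class_section_def)
  then show ?thesis
    by (auto simp: kernel_def class_map_frag_extend_diff)
qed

lemma H0_is_free_on_classesI:
  assumes boundary: "lbo_boundary1 f = frag_extend (\<lambda>p. frag_of (l p) - frag_of (r p))"
    and relation: "equivclp R = equivclp (\<lambda>a b. \<exists>p. a = l p \<and> b = r p)"
  shows "H0_is_free_on_classes f R"
proof -
  let ?S = "\<lambda>a b. \<exists>p. a = l p \<and> b = r p"
  let ?F = "free_Abelian_group (UNIV // {(u, v). equivclp ?S u v})"
  have kernel: "lbo_B0 f = kernel (free_Abelian_group UNIV) ?F (class_map ?S)"
    unfolding lbo_B0_def boundary by (rule range_frag_extend_diff_eq_kernel_class_map)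
  have "group_hom (free_Abelian_group UNIV) ?F (class_map ?S)"
    using class_map_hom by (simp add: group_hom_def group_hom_axioms_def)
  moreover have "class_map ?S ` carrier (free_Abelian_group UNIV) = carrier ?F"
  proof
    show "class_map ?S ` carrier (free_Abelian_group UNIV) \<subseteq> carrier ?F"
      using class_map_hom by (rule hom_carrier)
    show "carrier ?F \<subseteq> class_map ?S ` carrier (free_Abelian_group UNIV)"
    proof
      fix d assume "d \<in> carrier ?F"
      then have "d = class_map ?S (class_section d)"
        by (simp add: class_map_class_section)
      then show "d \<in> class_map ?S ` carrier (free_Abelian_group UNIV)" by simp
    qed
  qed
  ultimately have "lbo_H0 f \<cong> ?F"
    unfolding lbo_H0_def kernel by (rule group_hom.FactGroup_iso)
  moreover have "class_map R = class_map ?S" "{(u, v). equivclp R u v} = {(u, v). equivclp ?S u v}"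
    unfolding class_map_def relation by (rule refl)+
  ultimately show ?thesis
    unfolding H0_is_free_on_classes_def using kernel by simp
qed

lemma H0_is_free_on_classes_if_equivclp_eq:
  assumes "equivclp R = equivclp (\<lambda>a b. \<exists>x y. a = f (f x y) x \<and> b = f (f y x) y)"
  shows "H0_is_free_on_classes f R"
proof (rule H0_is_free_on_classesI)
  show "lbo_boundary1 f = frag_extend (\<lambda>p. frag_of (f (f (fst p) (snd p)) (fst p))
                                          - frag_of (f (f (snd p) (fst p)) (snd p)))"
    unfolding lbo_boundary1_def case_prod_unfold ..
  have "(\<lambda>a b. \<exists>x y. a = f (f x y) x \<and> b = f (f y x) y)
      = (\<lambda>a b. \<exists>p. a = f (f (fst p) (snd p)) (fst p) \<and> b = f (f (snd p) (fst p)) (snd p))"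
    by (simp only: split_paired_Ex fst_conv snd_conv)
  with assms show "equivclp R = equivclp (\<lambda>a b. \<exists>p. a = f (f (fst p) (snd p)) (fst p)
                                              \<and> b = f (f (snd p) (fst p)) (snd p))"
    by (simp only:)
qed

lemma proto_unital_shelf_absorb:
  assumes "is_proto_unital_shelf f"
  shows "f (f x y) x = f y x"
proof -
  have "f (f a b) c = f (f a c) (f b c)" and "f a b = f b (f a b)" for a b c
    using assms unfolding is_proto_unital_shelf_def is_shelf_def by blast+
  then show ?thesis by metis
qed

lemma equivclp_commute_relation_proto_unital_shelf:
  assumes "is_proto_unital_shelf f"
  shows "equivclp (\<lambda>a b. \<exists>x y. a = f x y \<and> b = f y x)
       = equivclp (\<lambda>a b. \<exists>x y. a = f (f x y) x \<and> b = f (f y x) y)"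
proof -
  have "(\<lambda>a b. \<exists>x y. a = f (f x y) x \<and> b = f (f y x) y) = (\<lambda>a b. \<exists>x y. a = f x y \<and> b = f y x)"
    by (auto simp: proto_unital_shelf_absorb[OF assms])
  then show ?thesis by simp
qed

lemma idempotent_semigroup_absorb:
  assumes "is_idempotent_semigroup f"
  shows "f x (f x y) = f x y"
  using assms unfolding is_idempotent_semigroup_def is_semigroup_def by metis

lemma equivclp_commute_relation_idempotent_semigroup:
  assumes "is_idempotent_semigroup f"
  shows "equivclp (\<lambda>a b. \<exists>x y. a = f x y \<and> b = f y x)
       = equivclp (\<lambda>a b. \<exists>x y. a = f (f x y) x \<and> b = f (f y x) y)"
    (is "equivclp ?C = equivclp ?L")
proof (rule equivclp_eqI)
  have assoc: "f (f a b) c = f a (f b c)" and idem: "f a a = a" for a b c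
    using assms unfolding is_idempotent_semigroup_def is_semigroup_def by blast+
  note absorb = idempotent_semigroup_absorb[OF assms]
  fix a b
  show "equivclp ?L a b" if "?C a b"
  proof -
    obtain x y where ab: "a = f x y" "b = f y x" using \<open>?C a b\<close> by blast
    have sandwich: "f (f (f x y) (f y x)) (f x y) = f x y" for x y
    proof -
      have "f (f (f x y) (f y x)) (f x y) = f (f x y) (f x y)"
        by (simp add: assoc absorb)
      then show ?thesis by (simp add: idem)
    qed
    have "?L a b"
      by (intro exI[of _ "f x y"] exI[of _ "f y x"]) (simp add: ab sandwich)
    then show ?thesis by blast
  qed
  show "equivclp ?C a b" if "?L a b"
  proof -
    obtain x y where ab: "a = f (f x y) x" "b = f (f y x) y" using \<open>?L a b\<close> by blast
    have "equivclp ?C (f (f x y) x) (f x (f x y))" by blast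
    also have "f x (f x y) = f x y" by (rule absorb)
    also have "equivclp ?C (f x y) (f y x)" by blast
    also have "f y x = f y (f y x)" by (rule absorb[symmetric])
    also have "equivclp ?C (f y (f y x)) (f (f y x) y)" by blast
    finally show ?thesis unfolding ab .
  qed
qed

lemma lbo_B0_eq_zero:
  assumes "\<And>x y. f (f x y) x = f (f y x) y"
  shows "lbo_B0 f = {0}"
proof -
  have "lbo_boundary1 f c = 0" for c
    unfolding lbo_boundary1_def by (rule frag_extend_eq_0) (auto simp: assms)
  then show ?thesis unfolding lbo_B0_def by auto
qed

lemma lbo_H0_iso_if_lbo_B0_eq_zero:
  fixes f :: "'a \<Rightarrow> 'a \<Rightarrow> 'a"
  assumes "lbo_B0 f = {0}"
  shows "lbo_H0 f \<cong> free_Abelian_group (UNIV :: 'a set)"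
  using group.trivial_factor_iso[OF group_free_Abelian_group[of "UNIV :: 'a set"]]
  unfolding one_free_Abelian_group lbo_H0_def assms by (rule is_isoI)

lemma commutative_absorb:
  assumes "is_proto_unital_shelf f \<or> is_idempotent_semigroup f" and "\<And>a b. f a b = f b a"
  shows "f (f x y) x = f x y"
  using assms proto_unital_shelf_absorb idempotent_semigroup_absorb by metis

theorem proposition2p2:
  shows "(\<forall>f :: 'a \<Rightarrow> 'a \<Rightarrow> 'a.
            is_semigroup f \<and> (\<forall>a b c. f (f (f a b) b) c = f (f a b) c) \<longrightarrow>
            H0_is_free_on_classes f (\<lambda>a b. \<exists>x y. a = f (f x y) x \<and> b = f (f y x) y))
       \<and> (\<forall>f :: 'a \<Rightarrow> 'a \<Rightarrow> 'a.
            is_proto_unital_shelf f \<or> is_idempotent_semigroup f \<longrightarrow>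
            H0_is_free_on_classes f (\<lambda>a b. \<exists>x y. a = f x y \<and> b = f y x))
       \<and> (\<forall>f :: 'a \<Rightarrow> 'a \<Rightarrow> 'a.
            (is_proto_unital_shelf f \<or> is_idempotent_semigroup f) \<and> (\<forall>a b. f a b = f b a) \<longrightarrow>
            lbo_B0 f = {0} \<and> lbo_H0 f \<cong> free_Abelian_group (UNIV :: 'a set))"
proof (intro conjI allI impI)
  fix f :: "'a \<Rightarrow> 'a \<Rightarrow> 'a"
  show "H0_is_free_on_classes f (\<lambda>a b. \<exists>x y. a = f (f x y) x \<and> b = f (f y x) y)"
    by (rule H0_is_free_on_classes_if_equivclp_eq) (rule refl)
next
  fix f :: "'a \<Rightarrow> 'a \<Rightarrow> 'a"
  assume "is_proto_unital_shelf f \<or> is_idempotent_semigroup f"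
  then show "H0_is_free_on_classes f (\<lambda>a b. \<exists>x y. a = f x y \<and> b = f y x)"
    using equivclp_commute_relation_proto_unital_shelf equivclp_commute_relation_idempotent_semigroup
    by (blast intro: H0_is_free_on_classes_if_equivclp_eq)
next
  fix f :: "'a \<Rightarrow> 'a \<Rightarrow> 'a"
  assume "(is_proto_unital_shelf f \<or> is_idempotent_semigroup f) \<and> (\<forall>a b. f a b = f b a)"
  then have "f (f x y) x = f (f y x) y" for x y
    using commutative_absorb by metis
  then show "lbo_B0 f = {0}" by (rule lbo_B0_eq_zero)
  then show "lbo_H0 f \<cong> free_Abelian_group (UNIV :: 'a set)" by (rule lbo_H0_iso_if_lbo_B0_eq_zero)
qed

end
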